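(* Let $\mathcal{A}\subset\mathbb{Z}$ be a finite alphabet, let $G=(V,E)$ be a finite directed graph with edge labelling $\ell:E\to\mathcal{A}$, let $I\subseteq V$ be nonempty, assume $M=\sum_{a\in\mathcal{A}}M_a$ is primitive, let $\beta>1$ be a Pisot number, and let $\nu,\nu_I$ be as in the context. Define $W(t)=\lambda^{-1}\sum_{a\in\mathcal{A}}e^{-2\pi i a t}M_a$ for $t\in\mathbb{R}$. Then for all $t\in\mathbb{R}$, $$\widehat{\nu}(t)=\mathbf v_L^{\mathsf T}\prod_{n=1}^\infty W(\beta^{-n}t)\,\mathbf v_R\qquad\text{and}\qquad \widehat{\nu}_I(t)=\frac{1}{\mathbf v_I^{\mathsf T}\mathbf v_R}\mathbf v_I^{\mathsf T}\prod_{n=1}^\infty W(\beta^{-n}t)\,\mathbf v_R,$$ where the infinite matrix products are ordered from left to right, i.e. $\prod_{n=1}^\infty W(\beta^{-n}t)=\lim_{N\to\infty}W(\beta^{-1}t)W(\beta^{-2}t)\cdots W(\beta^{-N}t)$.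
   Context: For $a\in\mathcal{A}$, $M_a$ is the $V\times V$ matrix with $(M_a)_{ij}=1$ if $(i,j)\in E$ and $\ell((i,j))=a$, and $0$ otherwise. By Perron–Frobenius, $M$ has a dominant eigenvalue $\lambda>0$ with positive left eigenvector $\mathbf v_L$ and right eigenvector $\mathbf v_R$, normalised by $\mathbf v_L^{\mathsf T}\mathbf v_R=1$; $\mathbf v_I$ is the indicator vector of $I$. $\mathcal{K}^+\subseteq\mathcal{A}^{\mathbb{N}}$ is the set of sequences $(\ell(e_k))_{k\ge1}$ for infinite paths $e_1e_2\ldots$ in $G$ (terminal vertex of $e_j$ equals initial vertex of $e_{j+1}$), and $\mathcal{K}_I^+$ the subset coming from paths whose initial vertex lies in $I$. On cylinder sets $[\varepsilon_1,\ldots,\varepsilon_k]$ (sequences with $x_1=\varepsilon_1,\ldots,x_k=\varepsilon_k$), $\mu^+([\varepsilon_1,\ldots,\varepsilon_k])=\lambda^{-k}\mathbf v_L^{\mathsf T}M_{\varepsilon_1}\cdots M_{\varepsilon_k}\mathbf v_R$ defines a Borel probability measure on $\mathcal{K}^+$ and $\mu_I^+([\varepsilon_1,\ldots,\varepsilon_k])=\lambda^{-k}\mathbf v_I^{\mathsf T}M_{\varepsilon_1}\cdots M_{\varepsilon_k}\mathbf v_R/(\mathbf v_I^{\mathsf T}\mathbf v_R)$ one on $\mathcal{K}_I^+$. A Pisot number is an algebraic integer $>1$ all of whose other Galois conjugates have modulus $<1$ (integers $\ge2$ included). With $\phi^+(x)=\sum_{k\ge1}x_k\beta^{-k}$ (on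 $\mathcal{K}^+$, resp. its restriction $\phi_I^+$ to $\mathcal{K}_I^+$), $\nu=(\phi^+)_*(\mu^+)$ and $\nu_I=(\phi_I^+)_*(\mu_I^+)$. Fourier transforms are $\widehat{\nu}(t)=\int e^{-2\pi i x t}\,d\nu(x)$, and similarly for $\nu_I$. *)

theory Defs
  imports "HOL-Probability.Probability" "HOL-Computational_Algebra.Polynomial"
begin

definition pisot :: "real \<Rightarrow> bool" where
  "pisot \<beta> \<longleftrightarrow> \<beta> > 1 \<and>
     (\<exists>p :: int poly. lead_coeff p = 1 \<and> irreducible p \<and>
        poly (map_poly of_int p) \<beta> = 0 \<and>
        (\<forall>z :: complex. poly (map_poly of_int p) z = 0 \<and> z \<noteq> complex_of_real \<beta> \<longrightarrow> cmod z < 1))"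

primrec matpow :: "'a::comm_ring_1^'n^'n \<Rightarrow> nat \<Rightarrow> 'a^'n^'n" where
  "matpow A 0 = mat 1"
| "matpow A (Suc k) = matpow A k ** A"

definition primitive_matrix :: "real^'n^'n \<Rightarrow> bool" where
  "primitive_matrix A \<longleftrightarrow> (\<forall>i j. A $ i $ j \<ge> 0) \<and>
     (\<exists>k>0. \<forall>i j. matpow A k $ i $ j > 0)"

text \<open>Labelled graph on vertex type 'v (V = UNIV), edges E, labelling l.\<close>
definition label_matrix :: "('v \<times> 'v) set \<Rightarrow> ('v \<times> 'v \<Rightarrow> int) \<Rightarrow> int \<Rightarrow> real^'v^'v" where
  "label_matrix E l a = (\<chi> i j. if (i, j) \<in> E \<and> l (i, j) = a then 1 else 0)"

definition total_matrix :: "int set \<Rightarrow> ('v \<times> 'v) set \<Rightarrow> ('v \<times> 'v \<Rightarrow> int) \<Rightarrow> real^'v^'v" where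
  "total_matrix A E l = (\<Sum>a\<in>A. label_matrix E l a)"

definition word_matrix :: "('v \<times> 'v) set \<Rightarrow> ('v \<times> 'v \<Rightarrow> int) \<Rightarrow> int list \<Rightarrow> real^'v^'v" where
  "word_matrix E l ws = foldr (\<lambda>a P. label_matrix E l a ** P) ws (mat 1)"

text \<open>Sequence space A^N; sequences x are indexed from 0, so x 0 is x_1 of the paper.\<close>
definition seq_space :: "int set \<Rightarrow> (nat \<Rightarrow> int) measure" where
  "seq_space A = PiM UNIV (\<lambda>_. count_space A)"

definition cylinder :: "int set \<Rightarrow> int list \<Rightarrow> (nat \<Rightarrow> int) set" where
  "cylinder A ws = {x \<in> space (seq_space A). \<forall>j<length ws. x j = ws ! j}"

definition indicator_vec :: "'v set \<Rightarrow> real^'v" where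
  "indicator_vec I = (\<chi> i. if i \<in> I then 1 else 0)"

definition phi :: "real \<Rightarrow> (nat \<Rightarrow> int) \<Rightarrow> real" where
  "phi \<beta> x = (\<Sum>k. real_of_int (x k) / \<beta> ^ Suc k)"

definition fourier :: "real measure \<Rightarrow> real \<Rightarrow> complex" where
  "fourier \<nu> t = integral\<^sup>L \<nu> (\<lambda>x. exp (- 2 * complex_of_real pi * \<i> * complex_of_real (x * t)))"

definition Wmat :: "int set \<Rightarrow> ('v \<times> 'v) set \<Rightarrow> ('v \<times> 'v \<Rightarrow> int) \<Rightarrow> real \<Rightarrow> real \<Rightarrow> complex^'v^'v" where
  "Wmat A E l lam t = (\<chi> i j. complex_of_real (1 / lam) *
      (\<Sum>a\<in>A. exp (- 2 * complex_of_real pi * \<i> * complex_of_real (real_of_int a * t))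
               * complex_of_real (label_matrix E l a $ i $ j)))"

primrec partial_prod :: "(nat \<Rightarrow> complex^'v^'v) \<Rightarrow> nat \<Rightarrow> complex^'v^'v" where
  "partial_prod F 0 = mat 1"
| "partial_prod F (Suc N) = partial_prod F N ** F (Suc N)"

definition cmatrix :: "real^'v^'v \<Rightarrow> complex^'v^'v" where
  "cmatrix A = (\<chi> i j. complex_of_real (A $ i $ j))"

definition bilin :: "real^'v \<Rightarrow> complex^'v^'v \<Rightarrow> real^'v \<Rightarrow> complex" where
  "bilin u P w = (\<Sum>i\<in>UNIV. \<Sum>j\<in>UNIV. complex_of_real (u $ i) * P $ i $ j * complex_of_real (w $ j))"

end

theory Submission
  imports Defs
begin

text \<open>
  Multiplying out, the partial product W(t/\<beta>) ... W(t/\<beta>^N) is the sum, over all words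
  x_1 ... x_N over the alphabet, of the matrices \<lambda>^-N M_x_1 ... M_x_N weighted by
  exp(-2\<pi>i t \<Sigma>_k\<le>N x_k \<beta>^-k). Paired with the vectors that define the measure these
  matrices become cylinder measures, so the bilinear form of the partial product is the integral
  of exp(-2\<pi>i t \<Sigma>_k\<le>N x_k \<beta>^-k), and dominated convergence identifies its limit with the
  Fourier transform of the push-forward of the measure under \<phi>.

  The partial products converge because every factor is dominated entrywise by B = \<lambda>^-1 M and
  differs from B by at most a constant times \<beta>^-n B, while the powers of the primitive matrix B
  converge: for the positive fixed vector v of B the ratios (B^m)_ij / v_i are averaged by every
  power of B, and averaging with the strictly positive weights of B^k shrinks their oscillation
  by a fixed factor. Besides the cylinder formulas only \<beta> > 1, primitivity and the positive
  right eigenvector are used.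
\<close>

lemma matpow_add: "matpow X (a + b) = matpow X a ** matpow X b"
  by (induction b) (simp_all add: matrix_mul_assoc)

lemma matpow_nonneg:
  fixes X :: "real^'n::finite^'n"
  assumes "\<And>i j. 0 \<le> X $ i $ j"
  shows "0 \<le> matpow X m $ i $ j"
proof (induction m arbitrary: i j)
  case 0
  then show ?case by (simp add: mat_def)
next
  case (Suc m)
  then show ?case by (simp add: matrix_matrix_mult_def assms sum_nonneg)
qed

lemma matpow_fixed_vector:
  fixes X :: "'a::comm_ring_1^'n::finite^'n"
  assumes "X *v v = v"
  shows "matpow X m *v v = v"
  by (induction m) (simp_all add: matrix_vector_mul_assoc[symmetric] assms)

lemma matpow_scaleR:
  fixes X :: "real^'n::finite^'n"
  shows "matpow (c *\<^sub>R X) m = c ^ m *\<^sub>R matpow X m"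
  by (induction m) (simp_all add: matrix_scalar_ac scalar_matrix_assoc[symmetric])

lemma entry_le_of_fixed_vector:
  fixes X :: "real^'n::finite^'n"
  assumes "\<And>i j. 0 \<le> X $ i $ j" "X *v v = v" "\<And>i. 0 < v $ i"
  shows "X $ i $ j * v $ j \<le> v $ i"
proof -
  have "X $ i $ j * v $ j \<le> (\<Sum>l\<in>UNIV. X $ i $ l * v $ l)"
    using assms(1,3) by (intro member_le_sum mult_nonneg_nonneg) (auto simp: less_imp_le)
  also have "\<dots> = (X *v v) $ i" by (simp add: matrix_vector_mult_def)
  finally show ?thesis using assms(2) by simp
qed

lemma convex_combination_le:
  fixes w r :: "'i::finite \<Rightarrow> real"
  assumes "\<And>l. d \<le> w l" "0 \<le> d" "sum w UNIV = 1" "\<And>l. r l \<le> M"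
  shows "(\<Sum>l\<in>UNIV. w l * r l) \<le> (1 - d) * M + d * r l0"
proof -
  define w' where "w' l = w l - (if l = l0 then d else 0)" for l
  have w'_nonneg: "0 \<le> w' l" for l
    using assms(1)[of l] assms(2) by (auto simp: w'_def)
  have "(\<Sum>l\<in>UNIV. (if l = l0 then d else 0) * r l) = (\<Sum>l\<in>UNIV. if l = l0 then d * r l else 0)"
    by (intro sum.cong) auto
  then have "(\<Sum>l\<in>UNIV. w l * r l) = (\<Sum>l\<in>UNIV. w' l * r l) + d * r l0"
    by (simp add: w'_def left_diff_distrib sum_subtractf)
  also have "(\<Sum>l\<in>UNIV. w' l * r l) \<le> (\<Sum>l\<in>UNIV. w' l * M)"
    by (intro sum_mono mult_left_mono w'_nonneg assms(4))
  also have "\<dots> = (1 - d) * M"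
    using assms(3) by (simp add: w'_def sum_distrib_right[symmetric] sum_subtractf)
  finally show ?thesis by simp
qed

lemma convex_combination_ge:
  fixes w r :: "'i::finite \<Rightarrow> real"
  assumes "\<And>l. d \<le> w l" "0 \<le> d" "sum w UNIV = 1" "\<And>l. m \<le> r l"
  shows "(1 - d) * m + d * r l0 \<le> (\<Sum>l\<in>UNIV. w l * r l)"
  using convex_combination_le[OF assms(1-3), of "\<lambda>l. - r l" "- m" l0] assms(4)
  by (simp add: sum_negf)

lemma decseq_contraction_tendsto_zero:
  fixes f :: "nat \<Rightarrow> real"
  assumes "decseq f" "\<And>m. 0 \<le> f m" "\<And>m. f (k + m) \<le> q * f m" "q < 1"
  shows "f \<longlonglongrightarrow> 0"
proof -
  obtain L where L: "f \<longlonglongrightarrow> L" "\<forall>m. L \<le> f m"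
    using decseq_convergent[OF assms(1)] assms(2) by metis
  have "L \<le> q * L"
  proof (rule LIMSEQ_le)
    show "(\<lambda>m. f (m + k)) \<longlonglongrightarrow> L" by (rule LIMSEQ_ignore_initial_segment[OF L(1)])
    show "(\<lambda>m. q * f m) \<longlonglongrightarrow> q * L" by (intro tendsto_mult_left L(1))
  qed (use assms(3) in \<open>simp add: add.commute\<close>)
  moreover have "0 \<le> L" using LIMSEQ_le_const[OF L(1)] assms(2) by blast
  ultimately have "L = 0" using assms(4) by (smt (verit) mult_le_cancel_right1)
  then show ?thesis using L(1) by simp
qed

lemma averaging_iteration_convergent:
  fixes r :: "nat \<Rightarrow> 'i::finite \<Rightarrow> real" and w :: "nat \<Rightarrow> 'i \<Rightarrow> 'i \<Rightarrow> real"
  assumes avg: "\<And>s m i. r (s + m) i = (\<Sum>l\<in>UNIV. w s i l * r m l)"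
    and w_nonneg: "\<And>s i l. 0 \<le> w s i l" and w_sum: "\<And>s i. sum (w s i) UNIV = 1"
    and w_pos: "\<And>i l. 0 < w k i l"
  shows "convergent (\<lambda>m. r m i)"
proof -
  define hi where "hi m = Max (range (r m))" for m
  define lo where "lo m = Min (range (r m))" for m
  have bounds: "lo m \<le> r m i" "r m i \<le> hi m" for m i
    by (auto simp: hi_def lo_def)
  fix l0
  have hi_step: "hi (s + m) \<le> (1 - c) * hi m + c * r m l0"
    if "\<And>i l. c \<le> w s i l" "0 \<le> c" for s m c
  proof -
    have "r (s + m) i \<le> (1 - c) * hi m + c * r m l0" for i
      unfolding avg using that w_sum bounds by (intro convex_combination_le)
    then show ?thesis by (auto simp: hi_def)
  qed
  have lo_step: "(1 - c) * lo m + c * r m l0 \<le> lo (s + m)"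
    if "\<And>i l. c \<le> w s i l" "0 \<le> c" for s m c
  proof -
    have "(1 - c) * lo m + c * r m l0 \<le> r (s + m) i" for i
      unfolding avg using that w_sum bounds by (intro convex_combination_ge)
    then show ?thesis by (auto simp: lo_def)
  qed
  have "decseq hi" "incseq lo"
    using hi_step[where s = 1 and c = 0] lo_step[where s = 1 and c = 0] w_nonneg
    by (auto intro: decseq_SucI incseq_SucI)
  define d where "d = Min (range (\<lambda>(i, l). w k i l))"
  have "0 < d"
    using w_pos by (auto simp: d_def)
  have d_le: "d \<le> w k i l" for i l
    unfolding d_def by (rule Min_le) (auto intro: image_eqI[where x = "(i, l)"])
  have gap: "(\<lambda>m. hi m - lo m) \<longlonglongrightarrow> 0"
  proof (rule decseq_contraction_tendsto_zero)
    show "decseq (\<lambda>m. hi m - lo m)"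
      using \<open>decseq hi\<close> \<open>incseq lo\<close> by (simp add: decseq_def incseq_def diff_mono)
    show "0 \<le> hi m - lo m" for m
      using bounds[of m l0] by simp
    show "hi (k + m) - lo (k + m) \<le> (1 - d) * (hi m - lo m)" for m
      using hi_step[where s = k and c = d and m = m] lo_step[where s = k and c = d and m = m]
        d_le \<open>0 < d\<close> by (simp add: algebra_simps)
    show "1 - d < 1"
      using \<open>0 < d\<close> by simp
  qed
  have "lo 0 \<le> hi m" for m
    using bounds[of m l0] incseqD[OF \<open>incseq lo\<close>, of 0 m] by simp
  then obtain L where L: "hi \<longlonglongrightarrow> L"
    using decseq_convergent[OF \<open>decseq hi\<close>] by metis
  have "(\<lambda>m. hi m - (hi m - lo m)) \<longlonglongrightarrow> L - 0"
    by (rule tendsto_diff[OF L gap])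
  then have "lo \<longlonglongrightarrow> L" by simp
  then have "(\<lambda>m. r m i) \<longlonglongrightarrow> L"
    by (rule tendsto_sandwich[OF _ _ _ L, rotated 2]) (simp_all add: bounds)
  then show ?thesis by (auto simp: convergent_def)
qed

lemma matpow_entry_convergent:
  fixes B :: "real^'n::finite^'n" and v :: "real^'n"
  assumes nonneg: "\<And>i j. 0 \<le> B $ i $ j" and fixed: "B *v v = v" and pos: "\<And>i. 0 < v $ i"
    and primitive: "\<And>i j. 0 < matpow B k $ i $ j"
  shows "convergent (\<lambda>m. matpow B m $ i $ j)"
proof -
  define r where "r m i = matpow B m $ i $ j / v $ i" for m i
  define w where "w s i l = matpow B s $ i $ l * v $ l / v $ i" for s i l
  have v_nz: "v $ i \<noteq> 0" for i using pos[of i] by simp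
  have "convergent (\<lambda>m. r m i)"
  proof (rule averaging_iteration_convergent)
    show "r (s + m) i = (\<Sum>l\<in>UNIV. w s i l * r m l)" for s m i
      by (simp add: r_def w_def matpow_add matrix_matrix_mult_def sum_divide_distrib v_nz)
    show "0 \<le> w s i l" for s i l
      using matpow_nonneg[OF nonneg] pos by (simp add: w_def less_imp_le)
    show "sum (w s i) UNIV = 1" for s i
      using matpow_fixed_vector[OF fixed, of s] v_nz
      by (simp add: w_def sum_divide_distrib[symmetric] matrix_vector_mult_def vec_eq_iff)
    show "0 < w k i l" for i l
      using primitive pos by (simp add: w_def)
  qed
  then have "convergent (\<lambda>m. r m i * v $ i)"
    by (intro convergent_mult convergent_const)
  then show ?thesis by (simp add: r_def v_nz)
qed

lemma cmatrix_mult: "cmatrix (X ** Y) = cmatrix X ** cmatrix Y"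
  by (simp add: cmatrix_def vec_eq_iff matrix_matrix_mult_def)

lemma cmatrix_mat_1: "cmatrix (mat 1) = mat 1"
  by (simp add: cmatrix_def vec_eq_iff mat_def)

lemma matrix_diff_rdistrib:
  fixes Z :: "'a::ring_1^'p^'n::finite"
  shows "(X - Y) ** Z = X ** Z - Y ** Z"
  by (simp add: vec_eq_iff matrix_matrix_mult_def sum_subtractf algebra_simps)

lemma matrix_diff_ldistrib:
  fixes Z :: "'a::ring_1^'n::finite^'m"
  shows "Z ** (X - Y) = Z ** X - Z ** Y"
  by (simp add: vec_eq_iff matrix_matrix_mult_def sum_subtractf algebra_simps)

lemma partial_prod_add:
  "partial_prod F (K + m) = partial_prod F K ** partial_prod (\<lambda>n. F (K + n)) m"
  by (induction m) (simp_all add: matrix_mul_assoc)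

lemma norm_matrix_mult_entry_le:
  fixes X :: "complex^'n::finite^'m" and X' :: "complex^'p^'n"
    and Y :: "real^'n^'m" and Y' :: "real^'p^'n"
  assumes "\<And>i j. cmod (X $ i $ j) \<le> Y $ i $ j" "\<And>i j. cmod (X' $ i $ j) \<le> Y' $ i $ j"
  shows "cmod ((X ** X') $ i $ j) \<le> (Y ** Y') $ i $ j"
proof -
  have "cmod ((X ** X') $ i $ j) \<le> (\<Sum>l\<in>UNIV. cmod (X $ i $ l) * cmod (X' $ l $ j))"
    unfolding matrix_matrix_mult_def by (simp add: sum_norm_le norm_mult)
  also have "\<dots> \<le> (\<Sum>l\<in>UNIV. Y $ i $ l * Y' $ l $ j)"
    by (intro sum_mono mult_mono assms) (auto intro: order_trans[OF norm_ge_zero assms(1)])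
  finally show ?thesis by (simp add: matrix_matrix_mult_def)
qed

lemma partial_prod_entry_le:
  assumes "\<And>n i j. cmod (F n $ i $ j) \<le> B $ i $ j"
  shows "cmod (partial_prod F m $ i $ j) \<le> matpow B m $ i $ j"
proof (induction m arbitrary: i j)
  case 0
  then show ?case by (simp add: mat_def)
next
  case (Suc m)
  then show ?case by (simp add: norm_matrix_mult_entry_le assms)
qed

lemma partial_prod_deviation_le:
  fixes F :: "nat \<Rightarrow> complex^'n::finite^'n" and B :: "real^'n^'n"
  assumes bound: "\<And>n i j. cmod (F n $ i $ j) \<le> B $ i $ j"
    and dev: "\<And>n i j. cmod ((F n - cmatrix B) $ i $ j) \<le> e n * B $ i $ j"
  shows "cmod ((partial_prod F m - cmatrix (matpow B m)) $ i $ j)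
           \<le> (\<Sum>n<m. e (Suc n)) * matpow B m $ i $ j"
proof (induction m arbitrary: i j)
  case 0
  then show ?case by (simp add: cmatrix_mat_1)
next
  case (Suc m)
  let ?S = "\<Sum>n<m. e (Suc n)" and ?D = "partial_prod F m - cmatrix (matpow B m)"
  have "0 \<le> B $ i $ j" for i j
    using bound[of 0 i j] norm_ge_zero order_trans by blast
  then have "cmod (cmatrix (matpow B m) $ i $ j) \<le> matpow B m $ i $ j" for i j
    using matpow_nonneg[of B m i j] by (simp add: cmatrix_def)
  then have "cmod ((cmatrix (matpow B m) ** (F (Suc m) - cmatrix B)) $ i $ j)
      \<le> (matpow B m ** (e (Suc m) *\<^sub>R B)) $ i $ j"
    by (intro norm_matrix_mult_entry_le) (use dev in simp_all)
  moreover have "cmod ((?D ** F (Suc m)) $ i $ j) \<le> ((?S *\<^sub>R matpow B m) ** B) $ i $ j"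
    by (intro norm_matrix_mult_entry_le) (use Suc bound in simp_all)
  moreover have "partial_prod F (Suc m) - cmatrix (matpow B (Suc m))
      = ?D ** F (Suc m) + cmatrix (matpow B m) ** (F (Suc m) - cmatrix B)"
    by (simp add: cmatrix_mult matrix_diff_rdistrib matrix_diff_ldistrib)
  ultimately have "cmod ((partial_prod F (Suc m) - cmatrix (matpow B (Suc m))) $ i $ j)
      \<le> ((?S *\<^sub>R matpow B m) ** B) $ i $ j + (matpow B m ** (e (Suc m) *\<^sub>R B)) $ i $ j"
    by (simp add: norm_triangle_le)
  also have "\<dots> = (\<Sum>n<Suc m. e (Suc n)) * matpow B (Suc m) $ i $ j"
    by (simp add: matrix_scalar_ac scalar_matrix_assoc[symmetric] algebra_simps)
  finally show ?case .
qed

lemma convergent_if_approximated: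
  fixes x :: "nat \<Rightarrow> 'a::complete_space" and g :: "nat \<Rightarrow> nat \<Rightarrow> 'a"
  assumes conv: "\<And>K. convergent (g K)" and approx: "\<And>K m. dist (x (K + m)) (g K m) \<le> T K"
    and T: "T \<longlonglongrightarrow> 0"
  shows "convergent x"
proof -
  have "Cauchy x"
  proof (rule metric_CauchyI)
    fix e :: real assume "0 < e"
    then have "eventually (\<lambda>K. T K < e / 3) sequentially"
      using order_tendstoD(2)[OF T, of "e / 3"] by simp
    then obtain K where K: "T K < e / 3" by (auto simp: eventually_sequentially)
    obtain N where N: "\<forall>m\<ge>N. \<forall>m'\<ge>N. dist (g K m) (g K m') < e / 3"
      using metric_CauchyD[OF convergent_Cauchy[OF conv]] \<open>0 < e\<close>
      by (meson divide_pos_pos zero_less_numeral)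
    show "\<exists>M. \<forall>n\<ge>M. \<forall>n'\<ge>M. dist (x n) (x n') < e"
    proof (intro exI allI impI)
      fix n n' assume "K + N \<le> n" "K + N \<le> n'"
      then have "n = K + (n - K)" "n' = K + (n' - K)" "N \<le> n - K" "N \<le> n' - K" by auto
      then have "dist (x n) (g K (n - K)) < e / 3" "dist (g K (n - K)) (g K (n' - K)) < e / 3"
          "dist (g K (n' - K)) (x n') < e / 3"
        using approx[of K "n - K"] approx[of K "n' - K"] K N by (auto simp: dist_commute)
      then show "dist (x n) (x n') < e"
        by (rule dist_triangle_third)
    qed
  qed
  then show ?thesis by (simp add: Cauchy_convergent_iff)
qed

lemma convergent_matrix_entrywise:
  fixes X :: "nat \<Rightarrow> 'a::topological_space^'n::finite^'m::finite"
  assumes "\<And>i j. convergent (\<lambda>k. X k $ i $ j)"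
  shows "convergent X"
proof -
  obtain L where "\<And>i j. (\<lambda>k. X k $ i $ j) \<longlonglongrightarrow> L i j"
    using assms unfolding convergent_def by metis
  then have "(\<lambda>k. \<chi> i j. X k $ i $ j) \<longlonglongrightarrow> (\<chi> i j. L i j)"
    by (intro tendsto_vec_lambda)
  then show ?thesis by (auto simp: convergent_def)
qed

lemma partial_prod_shift_deviation_le:
  fixes F :: "nat \<Rightarrow> complex^'n::finite^'n" and B :: "real^'n^'n"
  assumes bound: "\<And>n i j. cmod (F n $ i $ j) \<le> B $ i $ j"
    and dev: "\<And>n i j. cmod ((F n - cmatrix B) $ i $ j) \<le> e n * B $ i $ j"
  shows "cmod ((partial_prod F (K + m) - partial_prod F K ** cmatrix (matpow B m)) $ i $ j)
           \<le> (\<Sum>n<m. e (K + Suc n)) * matpow B (K + m) $ i $ j"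
proof -
  let ?S = "\<Sum>n<m. e (K + Suc n)"
  have "partial_prod F (K + m) - partial_prod F K ** cmatrix (matpow B m)
      = partial_prod F K ** (partial_prod (\<lambda>n. F (K + n)) m - cmatrix (matpow B m))"
    by (simp add: partial_prod_add matrix_diff_ldistrib)
  then have "cmod ((partial_prod F (K + m) - partial_prod F K ** cmatrix (matpow B m)) $ i $ j)
      \<le> (matpow B K ** (?S *\<^sub>R matpow B m)) $ i $ j"
    using partial_prod_deviation_le[of "\<lambda>n. F (K + n)" B "\<lambda>n. e (K + n)"] bound dev
    by (simp add: norm_matrix_mult_entry_le partial_prod_entry_le)
  also have "\<dots> = ?S * matpow B (K + m) $ i $ j"
    by (simp add: matpow_add matrix_scalar_ac scalar_matrix_assoc[symmetric])
  finally show ?thesis .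
qed

lemma partial_prod_convergent:
  fixes F :: "nat \<Rightarrow> complex^'n::finite^'n" and B :: "real^'n^'n" and v :: "real^'n"
  assumes nonneg: "\<And>i j. 0 \<le> B $ i $ j" and fixed: "B *v v = v" and pos: "\<And>i. 0 < v $ i"
    and primitive: "\<And>i j. 0 < matpow B k $ i $ j"
    and bound: "\<And>n i j. cmod (F n $ i $ j) \<le> B $ i $ j"
    and dev: "\<And>n i j. cmod ((F n - cmatrix B) $ i $ j) \<le> e n * B $ i $ j"
    and e_nonneg: "\<And>n. 0 \<le> e n" and e_summable: "summable e"
  shows "convergent (partial_prod F)"
proof (rule convergent_matrix_entrywise)
  fix i j
  define tail where "tail K = (\<Sum>n. e (n + Suc K))" for K
  have "tail \<longlonglongrightarrow> 0"
    unfolding tail_def using LIMSEQ_Suc[OF suminf_exist_split2[OF e_summable]] by simp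
  show "convergent (\<lambda>N. partial_prod F N $ i $ j)"
  proof (rule convergent_if_approximated)
    show "convergent (\<lambda>m. (partial_prod F K ** cmatrix (matpow B m)) $ i $ j)" for K
    proof -
      have "convergent (\<lambda>m. \<Sum>l\<in>UNIV. partial_prod F K $ i $ l * of_real (matpow B m $ l $ j))"
        using matpow_entry_convergent[OF nonneg fixed pos primitive]
        by (intro convergent_sum convergent_mult convergent_const convergent_of_real)
      then show ?thesis by (simp add: matrix_matrix_mult_def cmatrix_def)
    qed
    show "dist (partial_prod F (K + m) $ i $ j) ((partial_prod F K ** cmatrix (matpow B m)) $ i $ j)
        \<le> tail K * (v $ i / v $ j)" for K m
    proof -
      have "dist (partial_prod F (K + m) $ i $ j) ((partial_prod F K ** cmatrix (matpow B m)) $ i $ j)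
          = cmod ((partial_prod F (K + m) - partial_prod F K ** cmatrix (matpow B m)) $ i $ j)"
        by (simp add: dist_norm)
      also have "\<dots> \<le> (\<Sum>n<m. e (K + Suc n)) * matpow B (K + m) $ i $ j"
        by (rule partial_prod_shift_deviation_le) (use bound dev in simp_all)
      also have "\<dots> \<le> tail K * (v $ i / v $ j)"
      proof (rule mult_mono)
        show "(\<Sum>n<m. e (K + Suc n)) \<le> tail K"
          unfolding tail_def
          using sum_le_suminf[OF summable_ignore_initial_segment[OF e_summable, of "Suc K"], of "{..<m}"]
            e_nonneg by (simp add: add.commute)
        show "matpow B (K + m) $ i $ j \<le> v $ i / v $ j"
          using entry_le_of_fixed_vector[OF matpow_nonneg[OF nonneg] matpow_fixed_vector[OF fixed] pos]
            pos[of j] by (simp add: field_simps)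
        show "0 \<le> tail K"
          unfolding tail_def
          using e_nonneg by (intro suminf_nonneg summable_ignore_initial_segment e_summable) auto
      qed (simp add: matpow_nonneg nonneg)
      finally show ?thesis .
    qed
    show "(\<lambda>K. tail K * (v $ i / v $ j)) \<longlonglongrightarrow> 0"
      by (rule tendsto_mult_left_zero[OF \<open>tail \<longlonglongrightarrow> 0\<close>])
  qed
qed

definition fourier_kernel :: "real \<Rightarrow> complex" where
  "fourier_kernel x = exp (- 2 * complex_of_real pi * \<i> * complex_of_real x)"

lemma fourier_kernel_eq_cis: "fourier_kernel x = cis (- 2 * pi * x)"
  by (simp add: fourier_kernel_def cis_conv_exp mult_ac)

lemma norm_fourier_kernel [simp]: "cmod (fourier_kernel x) = 1"
  by (simp add: fourier_kernel_eq_cis)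

lemma fourier_kernel_sum: "fourier_kernel (\<Sum>k\<in>S. f k) = (\<Prod>k\<in>S. fourier_kernel (f k))"
  by (cases "finite S") (simp_all add: fourier_kernel_def exp_sum sum_distrib_left)

lemma norm_fourier_kernel_minus_1_le: "cmod (fourier_kernel x - 1) \<le> 2 * pi * \<bar>x\<bar>"
proof -
  have "cmod (fourier_kernel x - 1) = 2 * \<bar>sin (- 2 * pi * x / 2)\<bar>"
    unfolding fourier_kernel_eq_cis cis_conv_exp by (rule dist_exp_i_1)
  also have "\<dots> \<le> 2 * \<bar>- 2 * pi * x / 2\<bar>"
    using abs_sin_x_le_abs_x by simp
  finally show ?thesis by (simp add: abs_mult)
qed

lemma continuous_on_fourier_kernel: "continuous_on S fourier_kernel"
  unfolding fourier_kernel_def by (intro continuous_intros)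

lemma Wmat_entry:
  "Wmat A E l lam s $ i $ j =
     (\<Sum>a\<in>A. fourier_kernel (of_int a * s) * of_real (label_matrix E l a $ i $ j)) / of_real lam"
  by (simp add: Wmat_def fourier_kernel_def field_simps)

lemma total_matrix_entry: "total_matrix A E l $ i $ j = (\<Sum>a\<in>A. label_matrix E l a $ i $ j)"
  by (simp add: total_matrix_def sum_component)

lemma label_matrix_nonneg: "0 \<le> label_matrix E l a $ i $ j"
  by (simp add: label_matrix_def)

lemma norm_Wmat_entry_le:
  assumes "0 < lam"
  shows "cmod (Wmat A E l lam s $ i $ j) \<le> ((1 / lam) *\<^sub>R total_matrix A E l) $ i $ j"
proof -
  have "cmod (\<Sum>a\<in>A. fourier_kernel (of_int a * s) * of_real (label_matrix E l a $ i $ j))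
      \<le> (\<Sum>a\<in>A. label_matrix E l a $ i $ j)"
    by (rule sum_norm_le) (simp add: norm_mult label_matrix_nonneg)
  then show ?thesis
    using assms by (simp add: Wmat_entry total_matrix_entry norm_divide divide_right_mono)
qed

lemma norm_Wmat_deviation_le:
  assumes "finite A" "0 < lam"
  shows "cmod ((Wmat A E l lam s - cmatrix ((1 / lam) *\<^sub>R total_matrix A E l)) $ i $ j)
      \<le> 2 * pi * (\<Sum>a\<in>A. \<bar>of_int a\<bar>) * \<bar>s\<bar> * ((1 / lam) *\<^sub>R total_matrix A E l) $ i $ j"
proof -
  define c where "c = 2 * pi * (\<Sum>a\<in>A. \<bar>of_int a\<bar>) * \<bar>s\<bar>"
  have kernel_le: "cmod (fourier_kernel (of_int a * s) - 1) \<le> c" if "a \<in> A" for a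
  proof -
    have "\<bar>of_int a\<bar> \<le> (\<Sum>a\<in>A. \<bar>of_int a :: real\<bar>)"
      using that assms(1) by (intro member_le_sum) auto
    then have "2 * pi * \<bar>of_int a * s\<bar> \<le> c"
      by (simp add: c_def abs_mult mult_right_mono)
    then show ?thesis using norm_fourier_kernel_minus_1_le order_trans by blast
  qed
  have "(Wmat A E l lam s - cmatrix ((1 / lam) *\<^sub>R total_matrix A E l)) $ i $ j
      = (\<Sum>a\<in>A. (fourier_kernel (of_int a * s) - 1) * of_real (label_matrix E l a $ i $ j)) / of_real lam"
    by (simp add: Wmat_entry cmatrix_def total_matrix_entry left_diff_distrib sum_subtractf
        diff_divide_distrib)
  then have "cmod ((Wmat A E l lam s - cmatrix ((1 / lam) *\<^sub>R total_matrix A E l)) $ i $ j)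
      = cmod (\<Sum>a\<in>A. (fourier_kernel (of_int a * s) - 1) * of_real (label_matrix E l a $ i $ j)) / lam"
    using assms(2) by (simp add: norm_divide)
  also have "\<dots> \<le> (\<Sum>a\<in>A. c * label_matrix E l a $ i $ j) / lam"
    using kernel_le assms(2)
    by (intro divide_right_mono sum_norm_le) (simp_all add: norm_mult label_matrix_nonneg mult_right_mono)
  also have "\<dots> = c * ((1 / lam) *\<^sub>R total_matrix A E l) $ i $ j"
    by (simp add: total_matrix_entry sum_distrib_left sum_divide_distrib)
  finally show ?thesis unfolding c_def .
qed

lemma Wmat_partial_prod_convergent:
  fixes E :: "('v::finite \<times> 'v) set" and vR :: "real^'v"
  assumes "finite A" "0 < lam" and primitive: "primitive_matrix (total_matrix A E l)"
    and vR_pos: "\<And>i. 0 < vR $ i" and vR_eig: "total_matrix A E l *v vR = lam *\<^sub>R vR"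
    and "1 < \<beta>"
  shows "convergent (partial_prod (\<lambda>n. Wmat A E l lam (t / \<beta> ^ n)))"
proof -
  let ?M = "total_matrix A E l"
  obtain k where M_nonneg: "\<And>i j. 0 \<le> ?M $ i $ j" and M_k: "\<And>i j. 0 < matpow ?M k $ i $ j"
    using primitive unfolding primitive_matrix_def by blast
  let ?c = "2 * pi * (\<Sum>a\<in>A. \<bar>of_int a\<bar>) * \<bar>t\<bar>"
  show ?thesis
  proof (rule partial_prod_convergent
      [where B = "(1 / lam) *\<^sub>R ?M" and e = "\<lambda>n. ?c * (1 / \<beta>) ^ n"])
    show "0 \<le> ((1 / lam) *\<^sub>R ?M) $ i $ j" for i j
      using M_nonneg \<open>0 < lam\<close> by simp
    show "((1 / lam) *\<^sub>R ?M) *v vR = vR"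
      using vR_eig \<open>0 < lam\<close> by (simp flip: scaleR_matrix_vector_assoc)
    show "0 < matpow ((1 / lam) *\<^sub>R ?M) k $ i $ j" for i j
      using M_k \<open>0 < lam\<close> by (simp add: matpow_scaleR)
    show "cmod (Wmat A E l lam (t / \<beta> ^ n) $ i $ j) \<le> ((1 / lam) *\<^sub>R ?M) $ i $ j" for n i j
      using norm_Wmat_entry_le[OF \<open>0 < lam\<close>] .
    show "cmod ((Wmat A E l lam (t / \<beta> ^ n) - cmatrix ((1 / lam) *\<^sub>R ?M)) $ i $ j)
        \<le> ?c * (1 / \<beta>) ^ n * ((1 / lam) *\<^sub>R ?M) $ i $ j" for n i j
      using norm_Wmat_deviation_le[OF assms(1,2), of E l "t / \<beta> ^ n" i j] \<open>1 < \<beta>\<close>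
      by (simp add: abs_divide power_divide)
    show "0 \<le> ?c * (1 / \<beta>) ^ n" for n
      using \<open>1 < \<beta>\<close> by (simp add: sum_nonneg)
    show "summable (\<lambda>n. ?c * (1 / \<beta>) ^ n)"
      using \<open>1 < \<beta>\<close> by (intro summable_mult summable_geometric) auto
  qed (use vR_pos in auto)
qed

definition words :: "int set \<Rightarrow> nat \<Rightarrow> int list set" where
  "words A N = {ws. set ws \<subseteq> A \<and> length ws = N}"

lemma finite_words: "finite A \<Longrightarrow> finite (words A N)"
  by (simp add: words_def finite_lists_length_eq)

lemma words_Suc: "words A (Suc N) = (\<lambda>(ws, a). ws @ [a]) ` (words A N \<times> A)"
proof
  show "words A (Suc N) \<subseteq> (\<lambda>(ws, a). ws @ [a]) ` (words A N \<times> A)"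
  proof
    fix ws assume ws: "ws \<in> words A (Suc N)"
    then have "ws \<noteq> []" by (auto simp: words_def)
    with ws have "ws = butlast ws @ [last ws]" "(butlast ws, last ws) \<in> words A N \<times> A"
      by (auto simp: words_def dest: in_set_butlastD)
    then show "ws \<in> (\<lambda>(ws, a). ws @ [a]) ` (words A N \<times> A)" by force
  qed
qed (auto simp: words_def)

lemma word_matrix_snoc: "word_matrix E l (ws @ [a]) = word_matrix E l ws ** label_matrix E l a"
proof -
  have "foldr (\<lambda>a P. label_matrix E l a ** P) ws X = word_matrix E l ws ** X" for X
    by (induction ws) (simp_all add: word_matrix_def matrix_mul_assoc)
  then show ?thesis by (simp add: word_matrix_def)
qed

lemma partial_prod_Wmat_entry:
  assumes "finite A"
  shows "partial_prod (\<lambda>n. Wmat A E l lam (s n)) N $ i $ j =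
    (\<Sum>ws\<in>words A N. (\<Prod>k<N. fourier_kernel (of_int (ws ! k) * s (Suc k)))
       * of_real (word_matrix E l ws $ i $ j / lam ^ N))"
proof (induction N arbitrary: j)
  case 0
  have "words A 0 = {[]}" by (auto simp: words_def)
  then show ?case by (simp add: mat_def word_matrix_def)
next
  case (Suc N)
  let ?c = "\<lambda>ws. \<Prod>k<N. fourier_kernel (of_int (ws ! k) * s (Suc k))"
  let ?e = "\<lambda>a. fourier_kernel (of_int a * s (Suc N))"
  have "partial_prod (\<lambda>n. Wmat A E l lam (s n)) (Suc N) $ i $ j
      = (\<Sum>m\<in>UNIV. (\<Sum>ws\<in>words A N. ?c ws * of_real (word_matrix E l ws $ i $ m / lam ^ N))
          * ((\<Sum>a\<in>A. ?e a * of_real (label_matrix E l a $ m $ j)) / of_real lam))"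
    by (simp add: matrix_matrix_mult_def Suc.IH Wmat_entry)
  also have "\<dots> = (\<Sum>(ws, a)\<in>words A N \<times> A. ?c ws * ?e a
      * of_real (word_matrix E l (ws @ [a]) $ i $ j / lam ^ Suc N))"
    by (simp add: sum.cartesian_product[symmetric] word_matrix_snoc matrix_matrix_mult_def
        sum_distrib_left sum_distrib_right sum_divide_distrib sum.swap[of _ UNIV] mult_ac)
  also have "\<dots> = (\<Sum>(ws, a)\<in>words A N \<times> A.
      (\<Prod>k<Suc N. fourier_kernel (of_int ((ws @ [a]) ! k) * s (Suc k)))
      * of_real (word_matrix E l (ws @ [a]) $ i $ j / lam ^ Suc N))"
    by (intro sum.cong refl) (auto simp: words_def nth_append)
  also have "\<dots> = (\<Sum>ws\<in>words A (Suc N).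
      (\<Prod>k<Suc N. fourier_kernel (of_int (ws ! k) * s (Suc k)))
      * of_real (word_matrix E l ws $ i $ j / lam ^ Suc N))"
    unfolding words_Suc by (subst sum.reindex) (auto simp: inj_on_def case_prod_beta)
  finally show ?case .
qed

lemma bilin_partial_prod_Wmat:
  fixes u w :: "real^'v::finite"
  assumes "finite A"
  shows "bilin u (partial_prod (\<lambda>n. Wmat A E l lam (s n)) N) w =
    (\<Sum>ws\<in>words A N. (\<Prod>k<N. fourier_kernel (of_int (ws ! k) * s (Suc k)))
       * of_real (u \<bullet> (word_matrix E l ws *v w) / lam ^ N))"
  by (simp add: bilin_def partial_prod_Wmat_entry[OF assms] inner_vec_def matrix_vector_mult_def
      sum_distrib_left sum_distrib_right sum_divide_distrib sum.swap[of _ "words A N"] mult_ac)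

lemma space_seq_space: "space (seq_space A) = {x. \<forall>k. x k \<in> A}"
  by (auto simp: seq_space_def space_PiM PiE_def Pi_def extensional_def)

lemma cylinder_in_sets: "cylinder A ws \<in> sets (seq_space A)"
  unfolding cylinder_def seq_space_def by measurable

lemma measurable_seq_space_component [measurable]:
  "(\<lambda>x. real_of_int (x k)) \<in> borel_measurable (seq_space A)"
proof -
  have "(\<lambda>x. x k) \<in> seq_space A \<rightarrow>\<^sub>M count_space A"
    unfolding seq_space_def by (rule measurable_component_singleton) simp
  moreover have "real_of_int \<in> count_space A \<rightarrow>\<^sub>M borel"
    by (simp add: measurable_count_space_eq1)
  ultimately show ?thesis by (rule measurable_compose)
qed

lemma indicator_cylinder_words:
  assumes "x \<in> space (seq_space A)" "ws \<in> words A N"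
  shows "indicator (cylinder A ws) x = (if ws = map x [0..<N] then 1 else (0::real))"
  using assms by (auto simp: cylinder_def indicator_def words_def list_eq_iff_nth_eq)

lemma integral_fourier_kernel_truncation:
  fixes \<nu> :: "(nat \<Rightarrow> int) measure" and u w :: "real^'v::finite" and E :: "('v \<times> 'v) set"
  assumes "finite A" and sets_eq: "sets \<nu> = sets (seq_space A)" and "prob_space \<nu>"
    and cyl: "\<And>ws. set ws \<subseteq> A \<Longrightarrow>
      measure \<nu> (cylinder A ws) = u \<bullet> (word_matrix E l ws *v w) / (lam ^ length ws * c)"
  shows "(\<integral>x. fourier_kernel ((\<Sum>k<N. of_int (x k) / \<beta> ^ Suc k) * t) \<partial>\<nu>)
     = bilin u (partial_prod (\<lambda>n. Wmat A E l lam (t / \<beta> ^ n)) N) w / of_real c"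
proof -
  interpret prob_space \<nu> by fact
  define H where "H ws = (\<Prod>k<N. fourier_kernel (of_int (ws ! k) * (t / \<beta> ^ Suc k)))" for ws
  have space_eq: "space \<nu> = space (seq_space A)"
    by (rule sets_eq_imp_space_eq[OF sets_eq])
  have integrand_simple: "fourier_kernel ((\<Sum>k<N. of_int (x k) / \<beta> ^ Suc k) * t)
      = (\<Sum>ws\<in>words A N. indicator (cylinder A ws) x *\<^sub>R H ws)" if "x \<in> space \<nu>" for x
  proof -
    have "map x [0..<N] \<in> words A N"
      using that by (auto simp: space_eq space_seq_space words_def)
    moreover have "fourier_kernel ((\<Sum>k<N. of_int (x k) / \<beta> ^ Suc k) * t) = H (map x [0..<N])"
      unfolding H_def sum_distrib_right fourier_kernel_sum by (simp add: mult_ac)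
    moreover have "(\<Sum>ws\<in>words A N. indicator (cylinder A ws) x *\<^sub>R H ws)
        = (\<Sum>ws\<in>words A N. if ws = map x [0..<N] then H ws else 0)"
      using that by (intro sum.cong) (simp_all add: space_eq indicator_cylinder_words)
    ultimately show ?thesis
      using finite_words[OF \<open>finite A\<close>] by (simp add: sum.delta')
  qed
  have "(\<integral>x. fourier_kernel ((\<Sum>k<N. of_int (x k) / \<beta> ^ Suc k) * t) \<partial>\<nu>)
      = (\<Sum>ws\<in>words A N. measure \<nu> (cylinder A ws) *\<^sub>R H ws)"
    using sets_eq cylinder_in_sets
    by (subst Bochner_Integration.integral_cong[OF refl integrand_simple])
       (auto intro!: has_bochner_integral_integral_eq has_bochner_integral_sum
         has_bochner_integral_indicator simp: less_top[symmetric])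
  also have "\<dots> = (\<Sum>ws\<in>words A N. H ws * of_real (u \<bullet> (word_matrix E l ws *v w) / lam ^ N))
      / of_real c"
    unfolding sum_divide_distrib
    by (intro sum.cong refl) (simp add: cyl words_def scaleR_conv_of_real field_simps)
  also have "\<dots> = bilin u (partial_prod (\<lambda>n. Wmat A E l lam (t / \<beta> ^ n)) N) w / of_real c"
    by (simp add: bilin_partial_prod_Wmat[OF \<open>finite A\<close>] H_def)
  finally show ?thesis .
qed

lemma phi_partial_sums_tendsto:
  assumes "finite A" "1 < \<beta>" "x \<in> space (seq_space A)"
  shows "(\<lambda>N. \<Sum>k<N. of_int (x k) / \<beta> ^ Suc k) \<longlonglongrightarrow> phi \<beta> x"
proof -
  define S where "S = (\<Sum>a\<in>A. \<bar>real_of_int a\<bar>)"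
  have "norm (of_int (x k) / \<beta> ^ Suc k) \<le> S * (1 / \<beta>) ^ k" for k
  proof -
    have "\<bar>real_of_int (x k)\<bar> \<le> S"
      unfolding S_def using assms by (intro member_le_sum) (auto simp: space_seq_space)
    moreover have "\<beta> ^ k \<le> \<beta> ^ Suc k" using assms(2) by simp
    ultimately have "\<bar>real_of_int (x k)\<bar> / \<beta> ^ Suc k \<le> S / \<beta> ^ k"
      using assms(2) by (intro frac_le) auto
    then show ?thesis using assms(2) by (simp add: abs_divide power_divide)
  qed
  moreover have "summable (\<lambda>k. S * (1 / \<beta>) ^ k)"
    using assms(2) by (intro summable_mult summable_geometric) auto
  ultimately have "summable (\<lambda>k. of_int (x k) / \<beta> ^ Suc k)"
    by (rule summable_comparison_test'[where N = 0, rotated])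
  then show ?thesis unfolding phi_def by (rule summable_LIMSEQ)
qed

lemma borel_measurable_phi:
  assumes "finite A" "1 < \<beta>"
  shows "phi \<beta> \<in> borel_measurable (seq_space A)"
  by (rule borel_measurable_LIMSEQ_real[OF phi_partial_sums_tendsto[OF assms]]) auto

lemma borel_measurable_fourier_kernel [measurable]: "fourier_kernel \<in> borel_measurable borel"
  by (rule borel_measurable_continuous_onI[OF continuous_on_fourier_kernel])

lemma tendsto_bilin: "X \<longlonglongrightarrow> P \<Longrightarrow> (\<lambda>n. bilin u (X n) w) \<longlonglongrightarrow> bilin u P w"
  unfolding bilin_def by (intro tendsto_intros)

lemma tendsto_integral_fourier_kernel_partial_sums:
  fixes \<nu> :: "(nat \<Rightarrow> int) measure"
  assumes "finite A" and sets_eq: "sets \<nu> = sets (seq_space A)" and "prob_space \<nu>" and "1 < \<beta>"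
  shows "(\<lambda>N. \<integral>x. fourier_kernel ((\<Sum>k<N. of_int (x k) / \<beta> ^ Suc k) * t) \<partial>\<nu>)
           \<longlonglongrightarrow> (\<integral>x. fourier_kernel (phi \<beta> x * t) \<partial>\<nu>)"
proof -
  interpret prob_space \<nu> by fact
  have meas_eq: "measurable \<nu> = measurable (seq_space A)"
    by (intro ext measurable_cong_sets sets_eq refl)
  have [measurable]: "phi \<beta> \<in> borel_measurable \<nu>"
    unfolding meas_eq by (rule borel_measurable_phi[OF \<open>finite A\<close> \<open>1 < \<beta>\<close>])
  show ?thesis
  proof (rule integral_dominated_convergence[where w = "\<lambda>_. 1"])
    show "(\<lambda>x. fourier_kernel (phi \<beta> x * t)) \<in> borel_measurable \<nu>"
      by measurable
    show "(\<lambda>x. fourier_kernel ((\<Sum>k<N. of_int (x k) / \<beta> ^ Suc k) * t)) \<in> borel_measurable \<nu>" for N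
      unfolding meas_eq by measurable
    show "AE x in \<nu>. (\<lambda>N. fourier_kernel ((\<Sum>k<N. of_int (x k) / \<beta> ^ Suc k) * t))
        \<longlonglongrightarrow> fourier_kernel (phi \<beta> x * t)"
    proof (rule AE_I2)
      fix x assume "x \<in> space \<nu>"
      then have "(\<lambda>N. (\<Sum>k<N. of_int (x k) / \<beta> ^ Suc k) * t) \<longlonglongrightarrow> phi \<beta> x * t"
        by (intro tendsto_mult_right phi_partial_sums_tendsto[OF \<open>finite A\<close> \<open>1 < \<beta>\<close>])
          (simp add: sets_eq_imp_space_eq[OF sets_eq])
      then show "(\<lambda>N. fourier_kernel ((\<Sum>k<N. of_int (x k) / \<beta> ^ Suc k) * t))
          \<longlonglongrightarrow> fourier_kernel (phi \<beta> x * t)"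
        by (rule continuous_on_tendsto_compose[OF continuous_on_fourier_kernel[of UNIV]]) auto
    qed
  qed simp_all
qed

lemma fourier_distr_phi:
  fixes \<nu> :: "(nat \<Rightarrow> int) measure" and u w :: "real^'v::finite" and E :: "('v \<times> 'v) set"
  assumes "finite A" and sets_eq: "sets \<nu> = sets (seq_space A)" and "prob_space \<nu>"
    and cyl: "\<And>ws. set ws \<subseteq> A \<Longrightarrow>
      measure \<nu> (cylinder A ws) = u \<bullet> (word_matrix E l ws *v w) / (lam ^ length ws * c)"
    and "1 < \<beta>"
    and P: "partial_prod (\<lambda>n. Wmat A E l lam (t / \<beta> ^ n)) \<longlonglongrightarrow> P"
  shows "fourier (distr \<nu> borel (phi \<beta>)) t = bilin u P w / of_real c"
proof -
  have "phi \<beta> \<in> borel_measurable \<nu>"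
    unfolding measurable_cong_sets[OF sets_eq refl] by (rule borel_measurable_phi[OF assms(1,5)])
  then have fourier_eq: "fourier (distr \<nu> borel (phi \<beta>)) t = (\<integral>x. fourier_kernel (phi \<beta> x * t) \<partial>\<nu>)"
    unfolding fourier_def fourier_kernel_def[symmetric] by (rule integral_distr) measurable
  have truncation: "(\<lambda>N. \<integral>x. fourier_kernel ((\<Sum>k<N. of_int (x k) / \<beta> ^ Suc k) * t) \<partial>\<nu>)
      = (\<lambda>N. bilin u (partial_prod (\<lambda>n. Wmat A E l lam (t / \<beta> ^ n)) N) w / of_real c)"
    by (rule ext, rule integral_fourier_kernel_truncation[OF assms(1-4)])
  have "(\<lambda>N. bilin u (partial_prod (\<lambda>n. Wmat A E l lam (t / \<beta> ^ n)) N) w / of_real c)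
      \<longlonglongrightarrow> bilin u P w / of_real c"
    using tendsto_mult_right[OF tendsto_bilin[OF P], of u w "inverse (of_real c)"]
    by (simp add: divide_inverse)
  with tendsto_integral_fourier_kernel_partial_sums[OF assms(1-3,5), where t = t] show ?thesis
    unfolding fourier_eq truncation by (rule LIMSEQ_unique)
qed

theorem proposition9:
  fixes A :: "int set" and E :: "('v::finite \<times> 'v) set" and l :: "'v \<times> 'v \<Rightarrow> int"
    and I :: "'v set" and \<beta> lam :: real and vL vR :: "real^'v"
    and \<mu> \<mu>I :: "(nat \<Rightarrow> int) measure"
  assumes A_fin: "finite A"
    and labels: "l ` E \<subseteq> A"
    and I_ne: "I \<noteq> {}"
    and prim: "primitive_matrix (total_matrix A E l)"
    and pis: "pisot \<beta>"
    and lam_pos: "lam > 0"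
    and lam_dom: "\<And>(c::complex) v. v \<noteq> 0 \<Longrightarrow>
                   cmatrix (total_matrix A E l) *v v = c *s v \<Longrightarrow> cmod c \<le> lam"
    and vL_pos: "\<And>i. vL $ i > 0" and vR_pos: "\<And>i. vR $ i > 0"
    and vL_eig: "vL v* total_matrix A E l = lam *\<^sub>R vL"
    and vR_eig: "total_matrix A E l *v vR = lam *\<^sub>R vR"
    and norm: "vL \<bullet> vR = 1"
    and \<mu>_space: "sets \<mu> = sets (seq_space A)" and \<mu>_prob: "prob_space \<mu>"
    and \<mu>_cyl: "\<And>ws. set ws \<subseteq> A \<Longrightarrow>
        measure \<mu> (cylinder A ws) = vL \<bullet> (word_matrix E l ws *v vR) / lam ^ length ws"
    and \<mu>I_space: "sets \<mu>I = sets (seq_space A)" and \<mu>I_prob: "prob_space \<mu>I"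
    and \<mu>I_cyl: "\<And>ws. set ws \<subseteq> A \<Longrightarrow>
        measure \<mu>I (cylinder A ws) =
          indicator_vec I \<bullet> (word_matrix E l ws *v vR) / (lam ^ length ws * (indicator_vec I \<bullet> vR))"
  shows "\<forall>t::real. \<exists>P. (partial_prod (\<lambda>n. Wmat A E l lam (t / \<beta> ^ n)) \<longlonglongrightarrow> P) \<and>
           fourier (distr \<mu> borel (phi \<beta>)) t = bilin vL P vR \<and>
           fourier (distr \<mu>I borel (phi \<beta>)) t =
             bilin (indicator_vec I) P vR / complex_of_real (indicator_vec I \<bullet> vR)"
proof
  fix t :: real
  have "1 < \<beta>" using pis by (simp add: pisot_def)
  obtain P where P: "partial_prod (\<lambda>n. Wmat A E l lam (t / \<beta> ^ n)) \<longlonglongrightarrow> P"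
    using Wmat_partial_prod_convergent[OF A_fin lam_pos prim vR_pos vR_eig \<open>1 < \<beta>\<close>]
    by (auto simp: convergent_def)
  have "fourier (distr \<mu> borel (phi \<beta>)) t = bilin vL P vR / of_real 1"
    using \<mu>_cyl by (intro fourier_distr_phi[OF A_fin \<mu>_space \<mu>_prob _ \<open>1 < \<beta>\<close> P]) simp
  moreover have "fourier (distr \<mu>I borel (phi \<beta>)) t =
      bilin (indicator_vec I) P vR / of_real (indicator_vec I \<bullet> vR)"
    by (rule fourier_distr_phi[OF A_fin \<mu>I_space \<mu>I_prob \<mu>I_cyl \<open>1 < \<beta>\<close> P])
  ultimately show "\<exists>P. (partial_prod (\<lambda>n. Wmat A E l lam (t / \<beta> ^ n)) \<longlonglongrightarrow> P) \<and>
      fourier (distr \<mu> borel (phi \<beta>)) t = bilin vL P vR \<and>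
      fourier (distr \<mu>I borel (phi \<beta>)) t =
        bilin (indicator_vec I) P vR / complex_of_real (indicator_vec I \<bullet> vR)"
    using P by auto
qed

end
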